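(* Let $V,g$ be as below and let $Q_J=\tfrac43\,Q^+\nu Q^-_\tau\nu Q^+$ and $Q_R=\tfrac43\,Q^-\nu Q^+_\tau\nu Q^-$, as linear operators on $PC(V)$ (products meaning composition). Then $Q_J$ and $Q_R$ are idempotent and self-adjoint with respect to the inner product on $PC(V)$ induced by $g$; $Q_J$ has range $JC(V,g)$ and $Q_R$ has range $RC(V,g)$; and $Q_JQ_R=0$, so $JC(V,g)$ and $RC(V,g)$ are orthogonal in $PC(V)$.
   Context: $V$ is a finite-dimensional real vector space with nondegenerate symmetric bilinear form $g$. $PC(V)$ is the space of bilinear maps $T:V\times V\to L(V;V)$, identified with $V^*\otimes V^*\otimes V^*\otimes V$ and carrying the nondegenerate inner product induced by $g$. Linear involutions of $PC(V)$: $(\tau T)(u,v)=T(v,u)$; $(\alpha T)(u,v)=T(u,v)^*$ ($g$-adjoint); $\chi T$ given by $g((\chi T)(u,v)w,x)=g(T(w,x)u,v)$; $(\nu T)(u,v)w=T(w,v)u$. For such an involution $B$, $Q^\pm_B=\tfrac12(1\pm B)$. $Q^+=Q^+_\chi Q^+_\alpha Q^+_\tau$, $Q^-=Q^+_\chi Q^-_\alpha Q^-_\tau$. $\mathrm{Cycl}(T)(u,v)w=T(u,v)w+T(v,w)u+T(w,u)v$. $JC(V,g)$ (resp. $RC(V,g)$) is the set of $T$ with $\mathrm{Cycl}(T)=0$, $\chi T=T$ and $\tau T=T$ (resp. $\tau T=-T$). *)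

theory Defs
  imports "HOL-Analysis.Analysis"
begin

text \<open>The finite-dimensional real vector space V is modelled by a type
'a of class euclidean_space (its inner product is not used).  An element
T of PC(V) is a bilinear map V x V -> L(V;V), i.e. a map T u v w that is
linear in each of u, v, w.\<close>

type_synonym 'a pc = "'a \<Rightarrow> 'a \<Rightarrow> 'a \<Rightarrow> 'a"

definition nondeg_sym_form :: "('a::euclidean_space \<Rightarrow> 'a \<Rightarrow> real) \<Rightarrow> bool" where
  "nondeg_sym_form g \<longleftrightarrow> bilinear g \<and> (\<forall>x y. g x y = g y x)
     \<and> (\<forall>x. (\<forall>y. g x y = 0) \<longrightarrow> x = 0)"

definition PC :: "('a::euclidean_space) pc set" where
  "PC = {T. (\<forall>v w. linear (\<lambda>u. T u v w)) \<and> (\<forall>u w. linear (\<lambda>v. T u v w))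
             \<and> (\<forall>u v. linear (T u v))}"

definition pc_comb :: "real \<Rightarrow> ('a::real_vector) pc \<Rightarrow> real \<Rightarrow> 'a pc \<Rightarrow> 'a pc" where
  "pc_comb a T b S = (\<lambda>u v w. a *\<^sub>R T u v w + b *\<^sub>R S u v w)"

definition gadj :: "('a \<Rightarrow> 'a \<Rightarrow> real) \<Rightarrow> ('a \<Rightarrow> 'a) \<Rightarrow> 'a \<Rightarrow> 'a" where
  "gadj g A y = (THE z. \<forall>x. g z x = g y (A x))"

definition tau_op :: "'a pc \<Rightarrow> 'a pc" where
  "tau_op T = (\<lambda>u v. T v u)"

definition alpha_op :: "('a \<Rightarrow> 'a \<Rightarrow> real) \<Rightarrow> 'a pc \<Rightarrow> 'a pc" where
  "alpha_op g T = (\<lambda>u v. gadj g (T u v))"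

definition chi_op :: "('a \<Rightarrow> 'a \<Rightarrow> real) \<Rightarrow> 'a pc \<Rightarrow> 'a pc" where
  "chi_op g T = (\<lambda>u v w. THE z. \<forall>x. g z x = g (T w x u) v)"

definition nu_op :: "'a pc \<Rightarrow> 'a pc" where
  "nu_op T = (\<lambda>u v w. T w v u)"

definition QP :: "(('a::real_vector) pc \<Rightarrow> 'a pc) \<Rightarrow> 'a pc \<Rightarrow> 'a pc" where
  "QP B T = pc_comb (1/2) T (1/2) (B T)"

definition QM :: "(('a::real_vector) pc \<Rightarrow> 'a pc) \<Rightarrow> 'a pc \<Rightarrow> 'a pc" where
  "QM B T = pc_comb (1/2) T (-(1/2)) (B T)"

definition Qplus :: "('a::real_vector \<Rightarrow> 'a \<Rightarrow> real) \<Rightarrow> 'a pc \<Rightarrow> 'a pc" where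
  "Qplus g = QP (chi_op g) \<circ> QP (alpha_op g) \<circ> QP tau_op"

definition Qminus :: "('a::real_vector \<Rightarrow> 'a \<Rightarrow> real) \<Rightarrow> 'a pc \<Rightarrow> 'a pc" where
  "Qminus g = QP (chi_op g) \<circ> QM (alpha_op g) \<circ> QM tau_op"

definition QJ :: "('a::real_vector \<Rightarrow> 'a \<Rightarrow> real) \<Rightarrow> 'a pc \<Rightarrow> 'a pc" where
  "QJ g T = pc_comb (4/3) ((Qplus g \<circ> nu_op \<circ> QM tau_op \<circ> nu_op \<circ> Qplus g) T) 0 T"

definition QR :: "('a::real_vector \<Rightarrow> 'a \<Rightarrow> real) \<Rightarrow> 'a pc \<Rightarrow> 'a pc" where
  "QR g T = pc_comb (4/3) ((Qminus g \<circ> nu_op \<circ> QP tau_op \<circ> nu_op \<circ> Qminus g) T) 0 T"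

definition Cycl :: "('a::real_vector) pc \<Rightarrow> 'a pc" where
  "Cycl T = (\<lambda>u v w. T u v w + T v w u + T w u v)"

definition JC :: "('a::euclidean_space \<Rightarrow> 'a \<Rightarrow> real) \<Rightarrow> 'a pc set" where
  "JC g = {T \<in> PC. Cycl T = (\<lambda>u v w. 0) \<and> chi_op g T = T \<and> tau_op T = T}"

definition RC :: "('a::euclidean_space \<Rightarrow> 'a \<Rightarrow> real) \<Rightarrow> 'a pc set" where
  "RC g = {T \<in> PC. Cycl T = (\<lambda>u v w. 0) \<and> chi_op g T = T \<and> tau_op T = (\<lambda>u v w. - T u v w)}"

definition gdual :: "('a::euclidean_space \<Rightarrow> 'a \<Rightarrow> real) \<Rightarrow> 'a \<Rightarrow> 'a" where
  "gdual g i = (THE x. \<forall>j\<in>Basis. g x j = (if j = i then 1 else 0))"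

text \<open>Inner product on PC(V) induced by g (full contraction of all four
indices with g / its inverse); independent of the basis used.\<close>
definition pc_inner :: "('a::euclidean_space \<Rightarrow> 'a \<Rightarrow> real) \<Rightarrow> 'a pc \<Rightarrow> 'a pc \<Rightarrow> real" where
  "pc_inner g T S = (\<Sum>i\<in>Basis. \<Sum>j\<in>Basis. \<Sum>k\<in>Basis.
       g (T i j k) (S (gdual g i) (gdual g j) (gdual g k)))"

end

theory Submission
  imports Defs
begin

text \<open>Lowering the last index with g identifies PC(V) with the real 4-linear forms
f(a,b,c,d) = g(T(a,b)c, d). There tau, alpha, chi and nu become the index permutations (ab), (cd),
(ac)(bd) and (ac), each self-adjoint for the contraction of two forms induced by g. Because chi
conjugates tau into alpha, Q+ and Q- equal their reversed products, so Q_J and Q_R are palindromic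
products of self-adjoint operators. Expanding them gives explicit 24-term symmetrizations; their
symmetries, the cyclic identity, and the fact that they fix every form with the symmetries of
JC resp. RC are identities between these terms. Finally Q_J kills every form antisymmetric under
tau, since the first factor it applies is Q+_tau.\<close>

locale nondeg_form =
  fixes g :: "'a::euclidean_space \<Rightarrow> 'a \<Rightarrow> real"
  assumes nondeg_sym_form: "nondeg_sym_form g"
begin

lemma sym: "g x y = g y x"
  using nondeg_sym_form by (simp add: nondeg_sym_form_def)

lemma linear_left: "linear (\<lambda>x. g x y)"
  using nondeg_sym_form by (simp add: nondeg_sym_form_def bilinear_def)

lemma linear_right: "linear (\<lambda>y. g x y)"
  using nondeg_sym_form by (simp add: nondeg_sym_form_def bilinear_def)

lemma linear_left_compose: "linear h \<Longrightarrow> linear (\<lambda>x. g (h x) y)"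
  by (rule linear_compose[OF _ linear_left, unfolded o_def])

lemma linear_right_compose: "linear h \<Longrightarrow> linear (\<lambda>x. g y (h x))"
  by (rule linear_compose[OF _ linear_right, unfolded o_def])

lemma eqI:
  assumes "\<And>x. g p x = g q x"
  shows "p = q"
proof -
  have "\<forall>x. g (p - q) x = 0"
    using assms real_vector.linear_diff[OF linear_left] by simp
  then have "p - q = 0"
    using nondeg_sym_form unfolding nondeg_sym_form_def by blast
  then show ?thesis
    by simp
qed

lemma linear_by_form:
  assumes "\<And>x. linear (\<lambda>u. g (F u) x)"
  shows "linear F"
proof (rule linearI)
  fix u v
  show "F (u + v) = F u + F v"
    by (rule eqI) (simp add: real_vector.linear_add[OF assms] real_vector.linear_add[OF linear_left])
next
  fix r u
  show "F (r *\<^sub>R u) = r *\<^sub>R F u"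
    by (rule eqI) (simp add: linear_cmul[OF assms] linear_cmul[OF linear_left])
qed

lemma riesz_representation:
  assumes f: "linear f"
  shows "\<exists>!z. \<forall>x. g z x = f x"
proof -
  define \<Phi> where "\<Phi> z = (\<Sum>b\<in>Basis. g z b *\<^sub>R b)" for z
  have "linear \<Phi>"
    unfolding \<Phi>_def
    by (rule linearI) (simp_all add: real_vector.linear_add[OF linear_left] linear_cmul[OF linear_left]
        scaleR_add_left sum.distrib scaleR_sum_right)
  have \<Phi>_inner: "\<Phi> z \<bullet> x = g z x" for z x
  proof -
    have "g z x = g z (\<Sum>b\<in>Basis. (x \<bullet> b) *\<^sub>R b)"
      by (simp add: euclidean_representation)
    also have "\<dots> = (\<Sum>b\<in>Basis. (x \<bullet> b) * g z b)"
      by (simp add: real_vector.linear_sum[OF linear_right] linear_cmul[OF linear_right])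
    finally show ?thesis
      by (simp add: \<Phi>_def inner_sum_right mult.commute inner_commute)
  qed
  have "inj \<Phi>"
    by (rule injI, rule eqI) (metis \<Phi>_inner)
  then obtain z where z: "\<Phi> z = (\<Sum>b\<in>Basis. f b *\<^sub>R b)"
    using linear_injective_imp_surjective[OF \<open>linear \<Phi>\<close>] by (metis surjD)
  have "g z x = f x" for x
  proof -
    have "f x = f (\<Sum>b\<in>Basis. (x \<bullet> b) *\<^sub>R b)"
      by (simp add: euclidean_representation)
    also have "\<dots> = \<Phi> z \<bullet> x"
      by (simp add: z real_vector.linear_sum[OF f] linear_cmul[OF f] inner_sum_left inner_sum_right
          inner_commute mult.commute)
    finally show ?thesis
      by (simp add: \<Phi>_inner)
  qed
  then show ?thesis
    by (metis eqI)
qed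

lemma representative: "linear f \<Longrightarrow> g (THE z. \<forall>x. g z x = f x) x = f x"
  using theI'[OF riesz_representation] by blast

lemma chi_op:
  assumes "T \<in> PC"
  shows "g (chi_op g T u v w) x = g (T w x u) v"
proof -
  have "linear (\<lambda>x. g (T w x u) v)"
    using assms by (intro linear_left_compose) (simp add: PC_def)
  then show ?thesis
    unfolding chi_op_def by (rule representative)
qed

lemma alpha_op:
  assumes "T \<in> PC"
  shows "g (alpha_op g T u v w) x = g (T u v x) w"
proof -
  have "linear (\<lambda>x. g w (T u v x))"
    using assms by (intro linear_right_compose) (simp add: PC_def)
  then show ?thesis
    unfolding alpha_op_def gadj_def by (subst representative) (simp_all add: sym)
qed

lemma chi_op_PC:
  assumes T: "T \<in> PC"
  shows "chi_op g T \<in> PC"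
proof -
  have lin: "linear (\<lambda>u. T u v w)" "linear (\<lambda>v. T u v w)" "linear (T u v)" for u v w
    using T by (simp_all add: PC_def)
  show ?thesis
    unfolding PC_def
    by (intro CollectI conjI allI linear_by_form)
      (simp_all add: chi_op[OF T] linear_left_compose lin linear_right)
qed

lemma alpha_op_PC:
  assumes T: "T \<in> PC"
  shows "alpha_op g T \<in> PC"
proof -
  have lin: "linear (\<lambda>u. T u v w)" "linear (\<lambda>v. T u v w)" "linear (T u v)" for u v w
    using T by (simp_all add: PC_def)
  show ?thesis
    unfolding PC_def
    by (intro CollectI conjI allI linear_by_form)
      (simp_all add: alpha_op[OF T] linear_left_compose lin linear_right)
qed

end

lemma pc_comb_PC:
  assumes T: "T \<in> PC" and S: "S \<in> PC"
  shows "pc_comb x T y S \<in> PC"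
  using assms unfolding PC_def pc_comb_def
  by (auto intro!: real_vector.linear_compose_add real_vector.linear_compose_scale_right)

lemma tau_op_PC: "T \<in> PC \<Longrightarrow> tau_op T \<in> PC"
  by (simp add: PC_def tau_op_def)

lemma nu_op_PC: "T \<in> PC \<Longrightarrow> nu_op T \<in> PC"
  by (simp add: PC_def nu_op_def)

type_synonym 'a form4 = "'a \<Rightarrow> 'a \<Rightarrow> 'a \<Rightarrow> 'a \<Rightarrow> real"

definition lower :: "('a \<Rightarrow> 'a \<Rightarrow> real) \<Rightarrow> 'a pc \<Rightarrow> 'a form4" where
  "lower g T = (\<lambda>a b c d. g (T a b c) d)"

definition tau4 :: "'a form4 \<Rightarrow> 'a form4" where
  "tau4 f = (\<lambda>a b c d. f b a c d)"

definition alpha4 :: "'a form4 \<Rightarrow> 'a form4" where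
  "alpha4 f = (\<lambda>a b c d. f a b d c)"

definition chi4 :: "'a form4 \<Rightarrow> 'a form4" where
  "chi4 f = (\<lambda>a b c d. f c d a b)"

definition nu4 :: "'a form4 \<Rightarrow> 'a form4" where
  "nu4 f = (\<lambda>a b c d. f c b a d)"

definition cycl4 :: "'a form4 \<Rightarrow> 'a form4" where
  "cycl4 f = (\<lambda>a b c d. f a b c d + f b c a d + f c a b d)"

definition comb4 :: "real \<Rightarrow> 'a form4 \<Rightarrow> real \<Rightarrow> 'a form4 \<Rightarrow> 'a form4" where
  "comb4 x f y h = (\<lambda>a b c d. x * f a b c d + y * h a b c d)"

definition QP4 :: "('a form4 \<Rightarrow> 'a form4) \<Rightarrow> 'a form4 \<Rightarrow> 'a form4" where
  "QP4 B f = comb4 (1/2) f (1/2) (B f)"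

definition QM4 :: "('a form4 \<Rightarrow> 'a form4) \<Rightarrow> 'a form4 \<Rightarrow> 'a form4" where
  "QM4 B f = comb4 (1/2) f (-(1/2)) (B f)"

definition Qplus4 :: "'a form4 \<Rightarrow> 'a form4" where
  "Qplus4 = QP4 chi4 \<circ> QP4 alpha4 \<circ> QP4 tau4"

definition Qminus4 :: "'a form4 \<Rightarrow> 'a form4" where
  "Qminus4 = QP4 chi4 \<circ> QM4 alpha4 \<circ> QM4 tau4"

definition QJ4 :: "'a form4 \<Rightarrow> 'a form4" where
  "QJ4 f = comb4 (4/3) ((Qplus4 \<circ> nu4 \<circ> QM4 tau4 \<circ> nu4 \<circ> Qplus4) f) 0 f"

definition QR4 :: "'a form4 \<Rightarrow> 'a form4" where
  "QR4 f = comb4 (4/3) ((Qminus4 \<circ> nu4 \<circ> QP4 tau4 \<circ> nu4 \<circ> Qminus4) f) 0 f"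

definition lowers ::
    "('a::euclidean_space \<Rightarrow> 'a \<Rightarrow> real) \<Rightarrow> ('a pc \<Rightarrow> 'a pc) \<Rightarrow> ('a form4 \<Rightarrow> 'a form4) \<Rightarrow> bool" where
  "lowers g B B4 \<longleftrightarrow> (\<forall>T\<in>PC. B T \<in> PC \<and> lower g (B T) = B4 (lower g T))"

lemma lowers_id: "lowers g (\<lambda>T. T) (\<lambda>f. f)"
  by (simp add: lowers_def)

lemma lowers_comp: "lowers g B B4 \<Longrightarrow> lowers g C C4 \<Longrightarrow> lowers g (B \<circ> C) (B4 \<circ> C4)"
  by (simp add: lowers_def)

lemma lower_tau: "lower g (tau_op T) = tau4 (lower g T)"
  by (simp add: lower_def tau_op_def tau4_def)

lemma lower_nu: "lower g (nu_op T) = nu4 (lower g T)"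
  by (simp add: lower_def nu_op_def nu4_def)

lemma lowers_tau: "lowers g tau_op tau4"
  by (simp add: lowers_def tau_op_PC lower_tau)

lemma lowers_nu: "lowers g nu_op nu4"
  by (simp add: lowers_def nu_op_PC lower_nu)

context nondeg_form
begin

lemma lower_inj:
  assumes "lower g T = lower g S"
  shows "T = S"
  by (intro ext eqI) (metis assms lower_def)

lemma lower_zero: "lower g (\<lambda>u v w. 0) = (\<lambda>a b c d. 0)"
  by (simp add: lower_def real_vector.linear_0[OF linear_left])

lemma lower_neg: "lower g (\<lambda>u v w. - T u v w) = (\<lambda>a b c d. - lower g T a b c d)"
  by (simp add: lower_def real_vector.linear_neg[OF linear_left])

lemma lower_Cycl: "lower g (Cycl T) = cycl4 (lower g T)"
  by (simp add: lower_def cycl4_def Cycl_def real_vector.linear_add[OF linear_left])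

lemma lower_pc_comb: "lower g (pc_comb x T y S) = comb4 x (lower g T) y (lower g S)"
  by (simp add: lower_def comb4_def pc_comb_def real_vector.linear_add[OF linear_left]
      linear_cmul[OF linear_left])

lemma lowers_comb:
  "lowers g B B4 \<Longrightarrow> lowers g C C4 \<Longrightarrow>
    lowers g (\<lambda>T. pc_comb x (B T) y (C T)) (\<lambda>f. comb4 x (B4 f) y (C4 f))"
  by (simp add: lowers_def pc_comb_PC lower_pc_comb)

lemma lower_chi: "T \<in> PC \<Longrightarrow> lower g (chi_op g T) = chi4 (lower g T)"
  by (simp add: lower_def chi4_def chi_op)

lemma lower_alpha: "T \<in> PC \<Longrightarrow> lower g (alpha_op g T) = alpha4 (lower g T)"
  by (simp add: lower_def alpha4_def alpha_op)

lemma lowers_chi: "lowers g (chi_op g) chi4"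
  by (simp add: lowers_def chi_op_PC lower_chi)

lemma lowers_alpha: "lowers g (alpha_op g) alpha4"
  by (simp add: lowers_def alpha_op_PC lower_alpha)

lemma lowers_QP: "lowers g B B4 \<Longrightarrow> lowers g (QP B) (QP4 B4)"
  unfolding QP_def[abs_def] QP4_def[abs_def] by (intro lowers_comb lowers_id)

lemma lowers_QM: "lowers g B B4 \<Longrightarrow> lowers g (QM B) (QM4 B4)"
  unfolding QM_def[abs_def] QM4_def[abs_def] by (intro lowers_comb lowers_id)

lemma lowers_QJ: "lowers g (QJ g) QJ4"
  unfolding QJ_def[abs_def] QJ4_def[abs_def] Qplus_def Qplus4_def
  by (intro lowers_comb lowers_id lowers_comp lowers_QP lowers_QM lowers_tau lowers_nu lowers_alpha
      lowers_chi)

lemma lowers_QR: "lowers g (QR g) QR4"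
  unfolding QR_def[abs_def] QR4_def[abs_def] Qminus_def Qminus4_def
  by (intro lowers_comb lowers_id lowers_comp lowers_QP lowers_QM lowers_tau lowers_nu lowers_alpha
      lowers_chi)

end

lemma QJ4_expand:
  "QJ4 f a b c d =
     (f a b c d + f a b d c + f b a c d + f b a d c + f c d a b + f c d b a + f d c a b + f d c b a) / 12
   - (f a c b d + f a c d b + f a d b c + f a d c b + f b c a d + f b c d a + f b d a c + f b d c a
      + f c a b d + f c a d b + f c b a d + f c b d a + f d a b c + f d a c b + f d b a c + f d b c a)
     / 24"
  by (simp add: QJ4_def Qplus4_def QP4_def QM4_def comb4_def tau4_def alpha4_def chi4_def nu4_def
      algebra_simps add_divide_distrib diff_divide_distrib)

lemma QR4_expand:
  "QR4 f a b c d =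
     (f a b c d - f a b d c - f b a c d + f b a d c + f c d a b - f c d b a - f d c a b + f d c b a) / 12
   + (f a c b d - f a c d b - f a d b c + f a d c b - f b c a d + f b c d a + f b d a c - f b d c a
      - f c a b d + f c a d b + f c b a d - f c b d a + f d a b c - f d a c b - f d b a c + f d b c a)
     / 24"
  by (simp add: QR4_def Qminus4_def QP4_def QM4_def comb4_def tau4_def alpha4_def chi4_def nu4_def
      algebra_simps add_divide_distrib diff_divide_distrib)

lemma tau4_QJ4: "tau4 (QJ4 f) = QJ4 f"
  by (simp add: fun_eq_iff tau4_def QJ4_expand field_simps)

lemma chi4_QJ4: "chi4 (QJ4 f) = QJ4 f"
  by (simp add: fun_eq_iff chi4_def QJ4_expand field_simps)

lemma cycl4_QJ4: "cycl4 (QJ4 f) = (\<lambda>a b c d. 0)"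
  by (simp add: fun_eq_iff cycl4_def QJ4_expand field_simps)

lemma tau4_QR4: "tau4 (QR4 f) = (\<lambda>a b c d. - QR4 f a b c d)"
  by (simp add: fun_eq_iff tau4_def QR4_expand field_simps)

lemma chi4_QR4: "chi4 (QR4 f) = QR4 f"
  by (simp add: fun_eq_iff chi4_def QR4_expand field_simps)

lemma cycl4_QR4: "cycl4 (QR4 f) = (\<lambda>a b c d. 0)"
  by (simp add: fun_eq_iff cycl4_def QR4_expand field_simps)

lemma QJ4_fixed:
  assumes "tau4 f = f" and "chi4 f = f" and "cycl4 f = (\<lambda>a b c d. 0)"
  shows "QJ4 f = f"
proof (intro ext)
  fix a b c d
  have tau: "f y x z w = f x y z w" and chi: "f z w x y = f x y z w"
    and cycl: "f x y z w + f y z x w + f z x y w = 0" for x y z w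
    using assms unfolding tau4_def chi4_def cycl4_def fun_eq_iff by blast+
  have alpha: "f x y w z = f x y z w" for x y z w
    by (metis tau chi)
  show "QJ4 f a b c d = f a b c d"
    using cycl[of a b c d] cycl[of a b d c] cycl[of a c d b] cycl[of a d b c]
    by (simp add: QJ4_expand tau chi alpha add_divide_distrib)
qed

lemma QR4_fixed:
  assumes "tau4 f = (\<lambda>a b c d. - f a b c d)" and "chi4 f = f" and "cycl4 f = (\<lambda>a b c d. 0)"
  shows "QR4 f = f"
proof (intro ext)
  fix a b c d
  have tau: "f y x z w = - f x y z w" and chi: "f z w x y = f x y z w"
    and cycl: "f x y z w + f y z x w + f z x y w = 0" for x y z w
    using assms unfolding tau4_def chi4_def cycl4_def fun_eq_iff by blast+
  have alpha: "f x y w z = - f x y z w" for x y z w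
    by (metis tau chi)
  \<comment> \<open>instantiated so that they only rewrite towards alphabetical order: the general rules loop\<close>
  show "QR4 f a b c d = f a b c d"
    using cycl[of a b c d] cycl[of a b d c] cycl[of a c d b] cycl[of a d b c]
    by (simp add: QR4_expand add_divide_distrib diff_divide_distrib chi tau[of a b] tau[of a c] tau[of a d] tau[of b c] tau[of b d] tau[of c d]
        alpha[of _ _ a b] alpha[of _ _ a c] alpha[of _ _ a d] alpha[of _ _ b c] alpha[of _ _ b d]
        alpha[of _ _ c d])
qed

lemma QJ4_tau_antisym:
  assumes "tau4 f = (\<lambda>a b c d. - f a b c d)"
  shows "QJ4 f = (\<lambda>a b c d. 0)"
proof -
  have "QP4 tau4 f = (\<lambda>a b c d. 0)"
    by (simp add: QP4_def comb4_def assms)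
  then have "Qplus4 f = (\<lambda>a b c d. 0)"
    by (simp add: Qplus4_def QP4_def comb4_def alpha4_def chi4_def)
  then show ?thesis
    by (simp add: QJ4_def Qplus4_def QP4_def QM4_def comb4_def tau4_def alpha4_def chi4_def nu4_def)
qed

definition inner4 :: "('a::euclidean_space \<Rightarrow> 'a \<Rightarrow> real) \<Rightarrow> 'a form4 \<Rightarrow> 'a form4 \<Rightarrow> real" where
  "inner4 g f h = (\<Sum>(i, j, k, l)\<in>Basis \<times> Basis \<times> Basis \<times> Basis.
      f i j k l * h (gdual g i) (gdual g j) (gdual g k) (gdual g l))"

definition adjoint4 ::
    "('a::euclidean_space \<Rightarrow> 'a \<Rightarrow> real) \<Rightarrow> ('a form4 \<Rightarrow> 'a form4) \<Rightarrow> ('a form4 \<Rightarrow> 'a form4) \<Rightarrow> bool" where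
  "adjoint4 g B C \<longleftrightarrow> (\<forall>f h. inner4 g (B f) h = inner4 g f (C h))"

lemma inner4_comb_left: "inner4 g (comb4 x f y h) k = x * inner4 g f k + y * inner4 g h k"
  unfolding inner4_def comb4_def by (simp add: split_def sum_distrib_left sum.distrib algebra_simps)

lemma inner4_comb_right: "inner4 g k (comb4 x f y h) = x * inner4 g k f + y * inner4 g k h"
  unfolding inner4_def comb4_def by (simp add: split_def sum_distrib_left sum.distrib algebra_simps)

lemma inner4_neg_right: "inner4 g k (\<lambda>a b c d. - h a b c d) = - inner4 g k h"
  unfolding inner4_def by (simp add: split_def sum_negf)

lemma adjoint4_tau: "adjoint4 g tau4 tau4"
  unfolding adjoint4_def inner4_def tau4_def
  by (intro allI sum.reindex_bij_witness[of _ "\<lambda>(i, j, k, l). (j, i, k, l)" "\<lambda>(i, j, k, l). (j, i, k, l)"])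
    auto

lemma adjoint4_alpha: "adjoint4 g alpha4 alpha4"
  unfolding adjoint4_def inner4_def alpha4_def
  by (intro allI sum.reindex_bij_witness[of _ "\<lambda>(i, j, k, l). (i, j, l, k)" "\<lambda>(i, j, k, l). (i, j, l, k)"])
    auto

lemma adjoint4_chi: "adjoint4 g chi4 chi4"
  unfolding adjoint4_def inner4_def chi4_def
  by (intro allI sum.reindex_bij_witness[of _ "\<lambda>(i, j, k, l). (k, l, i, j)" "\<lambda>(i, j, k, l). (k, l, i, j)"])
    auto

lemma adjoint4_nu: "adjoint4 g nu4 nu4"
  unfolding adjoint4_def inner4_def nu4_def
  by (intro allI sum.reindex_bij_witness[of _ "\<lambda>(i, j, k, l). (k, j, i, l)" "\<lambda>(i, j, k, l). (k, j, i, l)"])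
    auto

lemma adjoint4_id: "adjoint4 g (\<lambda>f. f) (\<lambda>f. f)"
  by (simp add: adjoint4_def)

lemma adjoint4_comp: "adjoint4 g B B' \<Longrightarrow> adjoint4 g C C' \<Longrightarrow> adjoint4 g (B \<circ> C) (C' \<circ> B')"
  by (simp add: adjoint4_def)

lemma adjoint4_comb:
  "adjoint4 g B B' \<Longrightarrow> adjoint4 g C C' \<Longrightarrow>
    adjoint4 g (\<lambda>f. comb4 x (B f) y (C f)) (\<lambda>f. comb4 x (B' f) y (C' f))"
  by (simp add: adjoint4_def inner4_comb_left inner4_comb_right)

lemma adjoint4_QP: "adjoint4 g B C \<Longrightarrow> adjoint4 g (QP4 B) (QP4 C)"
  unfolding QP4_def[abs_def] by (intro adjoint4_comb adjoint4_id)

lemma adjoint4_QM: "adjoint4 g B C \<Longrightarrow> adjoint4 g (QM4 B) (QM4 C)"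
  unfolding QM4_def[abs_def] by (intro adjoint4_comb adjoint4_id)

lemma Qplus4_reversed: "QP4 tau4 \<circ> (QP4 alpha4 \<circ> QP4 chi4) = Qplus4"
  by (simp add: fun_eq_iff Qplus4_def QP4_def comb4_def tau4_def alpha4_def chi4_def algebra_simps)

lemma Qminus4_reversed: "QM4 tau4 \<circ> (QM4 alpha4 \<circ> QP4 chi4) = Qminus4"
  by (simp add: fun_eq_iff Qminus4_def QP4_def QM4_def comb4_def tau4_def alpha4_def chi4_def
      algebra_simps)

lemma adjoint4_Qplus4: "adjoint4 g Qplus4 Qplus4"
proof -
  have "adjoint4 g Qplus4 (QP4 tau4 \<circ> (QP4 alpha4 \<circ> QP4 chi4))"
    unfolding Qplus4_def by (intro adjoint4_comp adjoint4_QP adjoint4_tau adjoint4_alpha adjoint4_chi)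
  then show ?thesis
    by (simp only: Qplus4_reversed)
qed

lemma adjoint4_Qminus4: "adjoint4 g Qminus4 Qminus4"
proof -
  have "adjoint4 g Qminus4 (QM4 tau4 \<circ> (QM4 alpha4 \<circ> QP4 chi4))"
    unfolding Qminus4_def
    by (intro adjoint4_comp adjoint4_QP adjoint4_QM adjoint4_tau adjoint4_alpha adjoint4_chi)
  then show ?thesis
    by (simp only: Qminus4_reversed)
qed

lemma adjoint4_palindrome:
  assumes "adjoint4 g P P" and "adjoint4 g N N" and "adjoint4 g M M"
  shows "adjoint4 g (P \<circ> N \<circ> M \<circ> N \<circ> P) (P \<circ> N \<circ> M \<circ> N \<circ> P)"
proof -
  have "adjoint4 g (P \<circ> N \<circ> M \<circ> N \<circ> P) (P \<circ> (N \<circ> (M \<circ> (N \<circ> P))))"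
    using assms by (intro adjoint4_comp)
  then show ?thesis
    by (simp only: o_assoc)
qed

lemma adjoint4_QJ4: "adjoint4 g QJ4 QJ4"
  unfolding QJ4_def[abs_def]
  by (intro adjoint4_comb adjoint4_id adjoint4_palindrome adjoint4_Qplus4 adjoint4_nu adjoint4_QM
      adjoint4_tau)

lemma adjoint4_QR4: "adjoint4 g QR4 QR4"
  unfolding QR4_def[abs_def]
  by (intro adjoint4_comb adjoint4_id adjoint4_palindrome adjoint4_Qminus4 adjoint4_nu adjoint4_QP
      adjoint4_tau)

context nondeg_form
begin

lemma gdual:
  assumes i: "i \<in> Basis" and j: "j \<in> Basis"
  shows "g (gdual g i) j = (if j = i then 1 else 0)"
proof -
  obtain z where z: "\<forall>x. g z x = x \<bullet> i"
    using riesz_representation[OF bounded_linear.linear[OF bounded_linear_inner_left]] by blast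
  have z_dual: "\<forall>j\<in>Basis. g z j = (if j = i then 1 else 0)"
    using z i by (simp add: inner_Basis)
  have "x = z" if "\<forall>j\<in>Basis. g x j = (if j = i then 1 else 0)" for x
  proof (rule eqI)
    fix y
    have "(\<lambda>y. g x y) = (\<lambda>y. g z y)"
      by (rule linear_eq_stdbasis[OF linear_right linear_right]) (use that z_dual in auto)
    then show "g x y = g z y"
      by metis
  qed
  then have "gdual g i = z"
    unfolding gdual_def using z_dual by (rule the_equality[rotated])
  then show ?thesis
    using z_dual j by simp
qed

lemma expand_gdual: "g a b = (\<Sum>l\<in>Basis. g a l * g b (gdual g l))"
proof -
  have a: "a = (\<Sum>l\<in>Basis. g a l *\<^sub>R gdual g l)"
  proof (rule eqI)
    fix x
    have "(\<lambda>x. g a x) = (\<lambda>x. g (\<Sum>l\<in>Basis. g a l *\<^sub>R gdual g l) x)"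
    proof (rule linear_eq_stdbasis[OF linear_right linear_right])
      fix m :: 'a
      assume m: "m \<in> Basis"
      have "g (\<Sum>l\<in>Basis. g a l *\<^sub>R gdual g l) m = (\<Sum>l\<in>Basis. g a l * g (gdual g l) m)"
        by (simp add: real_vector.linear_sum[OF linear_left] linear_cmul[OF linear_left])
      also have "\<dots> = (\<Sum>l\<in>Basis. if l = m then g a l else 0)"
        using m by (intro sum.cong) (auto simp: gdual)
      finally show "g a m = g (\<Sum>l\<in>Basis. g a l *\<^sub>R gdual g l) m"
        using m by simp
    qed
    then show "g a x = g (\<Sum>l\<in>Basis. g a l *\<^sub>R gdual g l) x"
      by metis
  qed
  have "g a b = g b (\<Sum>l\<in>Basis. g a l *\<^sub>R gdual g l)"
    by (subst a) (rule sym)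
  also have "\<dots> = (\<Sum>l\<in>Basis. g a l * g b (gdual g l))"
    by (simp add: real_vector.linear_sum[OF linear_right] linear_cmul[OF linear_right])
  finally show ?thesis .
qed

lemma pc_inner_lower: "pc_inner g T S = inner4 g (lower g T) (lower g S)"
proof -
  have "pc_inner g T S = (\<Sum>i\<in>Basis. \<Sum>j\<in>Basis. \<Sum>k\<in>Basis. \<Sum>l\<in>Basis.
      lower g T i j k l * lower g S (gdual g i) (gdual g j) (gdual g k) (gdual g l))"
    unfolding pc_inner_def lower_def by (subst expand_gdual) (rule refl)
  then show ?thesis
    unfolding inner4_def by (simp add: sum.cartesian_product split_def)
qed

lemma self_adjoint_if_lowers:
  assumes "lowers g B B4" and "adjoint4 g B4 B4" and "T \<in> PC" and "S \<in> PC"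
  shows "pc_inner g (B T) S = pc_inner g T (B S)"
  using assms by (simp add: lowers_def adjoint4_def pc_inner_lower)

end

context nondeg_form
begin

lemma lower_eq_transfer: "lower g T = f \<Longrightarrow> lower g S = h \<Longrightarrow> T = S \<longleftrightarrow> f = h"
  using lower_inj by blast

lemma JC_iff_lower:
  "T \<in> JC g \<longleftrightarrow> T \<in> PC \<and> tau4 (lower g T) = lower g T \<and> chi4 (lower g T) = lower g T
     \<and> cycl4 (lower g T) = (\<lambda>a b c d. 0)"
  using lower_eq_transfer[OF lower_Cycl lower_zero, of T] lower_eq_transfer[OF lower_chi refl, of T]
    lower_eq_transfer[OF lower_tau refl, of T]
  unfolding JC_def by blast

lemma RC_iff_lower:
  "T \<in> RC g \<longleftrightarrow> T \<in> PC \<and> tau4 (lower g T) = (\<lambda>a b c d. - lower g T a b c d)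
     \<and> chi4 (lower g T) = lower g T \<and> cycl4 (lower g T) = (\<lambda>a b c d. 0)"
  using lower_eq_transfer[OF lower_Cycl lower_zero, of T] lower_eq_transfer[OF lower_chi refl, of T]
    lower_eq_transfer[OF lower_tau lower_neg, of T]
  unfolding RC_def by blast

lemma QJ_in_JC: "T \<in> PC \<Longrightarrow> QJ g T \<in> JC g"
  using lowers_QJ by (simp add: lowers_def JC_iff_lower tau4_QJ4 chi4_QJ4 cycl4_QJ4)

lemma QR_in_RC: "T \<in> PC \<Longrightarrow> QR g T \<in> RC g"
  using lowers_QR by (simp add: lowers_def RC_iff_lower tau4_QR4 chi4_QR4 cycl4_QR4)

lemma QJ_fixes_JC: "T \<in> JC g \<Longrightarrow> QJ g T = T"
  using lowers_QJ by (auto simp: lowers_def JC_iff_lower QJ4_fixed intro: lower_inj)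

lemma QR_fixes_RC: "T \<in> RC g \<Longrightarrow> QR g T = T"
  using lowers_QR by (auto simp: lowers_def RC_iff_lower QR4_fixed intro: lower_inj)

lemma QJ_vanishes_on_RC: "T \<in> RC g \<Longrightarrow> QJ g T = (\<lambda>u v w. 0)"
  using lowers_QJ by (auto simp: lowers_def RC_iff_lower QJ4_tau_antisym lower_zero intro: lower_inj)

lemma JC_orthogonal_RC:
  assumes "T \<in> JC g" and "S \<in> RC g"
  shows "pc_inner g T S = 0"
proof -
  have "pc_inner g T S = inner4 g (tau4 (lower g T)) (lower g S)"
    using assms(1) by (simp add: pc_inner_lower JC_iff_lower)
  also have "\<dots> = inner4 g (lower g T) (tau4 (lower g S))"
    using adjoint4_tau[of g] unfolding adjoint4_def by blast
  also have "\<dots> = - pc_inner g T S"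
    using assms(2) by (simp add: pc_inner_lower RC_iff_lower inner4_neg_right)
  finally show ?thesis
    by simp
qed

end

lemma image_eq_if_retraction:
  assumes "\<And>x. x \<in> A \<Longrightarrow> f x \<in> B" and "\<And>x. x \<in> B \<Longrightarrow> f x = x" and "B \<subseteq> A"
  shows "f ` A = B"
  using assms by (auto intro: image_eqI[of _ f, OF sym])

theorem mainTheorem16:
  fixes g :: "'a::euclidean_space \<Rightarrow> 'a \<Rightarrow> real"
  assumes "nondeg_sym_form g"
  shows "(\<forall>T\<in>PC. QJ g (QJ g T) = QJ g T)
       \<and> (\<forall>T\<in>PC. QR g (QR g T) = QR g T)
       \<and> (\<forall>T\<in>PC. \<forall>S\<in>PC. pc_inner g (QJ g T) S = pc_inner g T (QJ g S))
       \<and> (\<forall>T\<in>PC. \<forall>S\<in>PC. pc_inner g (QR g T) S = pc_inner g T (QR g S))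
       \<and> QJ g ` PC = JC g
       \<and> QR g ` PC = RC g
       \<and> (\<forall>T\<in>PC. QJ g (QR g T) = (\<lambda>u v w. 0))
       \<and> (\<forall>T\<in>JC g. \<forall>S\<in>RC g. pc_inner g T S = 0)"
proof -
  interpret nondeg_form g
    by unfold_locales (fact assms)
  have "QJ g ` PC = JC g"
    by (rule image_eq_if_retraction[OF QJ_in_JC QJ_fixes_JC]) (auto simp: JC_def)
  moreover have "QR g ` PC = RC g"
    by (rule image_eq_if_retraction[OF QR_in_RC QR_fixes_RC]) (auto simp: RC_def)
  ultimately show ?thesis
    using self_adjoint_if_lowers[OF lowers_QJ adjoint4_QJ4] self_adjoint_if_lowers[OF lowers_QR adjoint4_QR4]
    by (simp add: QJ_in_JC QJ_fixes_JC QR_in_RC QR_fixes_RC QJ_vanishes_on_RC JC_orthogonal_RC)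
qed

end
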